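(* Let $G$ be a finitely generated group which is virtually $\mathbb{Z}$, i.e. $G$ has a subgroup of finite index isomorphic to $\mathbb{Z}$. Let $A$ be a finite alphabet and let $\Phi:A^G\to A^G$ be a cellular automaton on $G$. Then $\Phi$ is sensitive to initial conditions if and only if $\Phi$ has no equicontinuity point.
   Context: Let $E$ be a finite generating set of $G$ closed under inverses, $d_E$ the associated word metric on $G$, and $B_G(g,k)$ the closed ball of radius $k$ in $d_E$. Configurations are elements of $A^G$; $G$ acts on them by $(gx)(h)=x(g^{-1}h)$. The Cantor metric on $A^G$ is $d^E(x,y)=2^{-k}$ where $k=\min\{d_E(1_G,g): x(g)\neq y(g)\}$ (and $d^E(x,x)=0$); $B^E(x,r)$ denotes the closed ball in this metric. A cellular automaton (CA) on $G$ with alphabet $A$ is a map $\Phi:A^G\to A^G$ for which there are a finite set $S\subseteq G$ and a map $\mu:A^S\to A$ with $\Phi(x)(g)=\mu((g^{-1}x)|_S)$ for all $x,g$, i.e. $\Phi(x)(g)=\mu(s\mapsto x(gs))$. A configuration $x$ is an equicontinuity point of $\Phi$ if for every $\epsilon>0$ there is $\delta>0$ such that for all $t\in\mathbb{N}$, $\Phi^t(B^E(x,\delta))\subseteq B^E(\Phi^t(x),\epsilon)$. $\Phi$ is sensitive to initial conditions if there is $\epsilon>0$ such that for every $x\in A^G$ and every $\delta>0$ there exist $t\in\mathbb{N}$ and $y\in B^E(x,\delta)$ with $\Phi^t(y)\notin B^E(\Phi^t(x),\epsilon)$. (These notions do not depend on the choice of the finite generating set $E$.) *)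

theory Defs
  imports Complex_Main
begin

text \<open>The group G is a type of class group_add (written additively: + is the
group law, 0 the identity, uminus the inverse; commutativity is NOT assumed).
Configurations are functions 'g => 'a.\<close>

inductive_set gen_subgroup :: "'g::group_add set \<Rightarrow> 'g set" for E where
  zero: "0 \<in> gen_subgroup E"
| gen: "e \<in> E \<Longrightarrow> e \<in> gen_subgroup E"
| add: "x \<in> gen_subgroup E \<Longrightarrow> y \<in> gen_subgroup E \<Longrightarrow> x + y \<in> gen_subgroup E"
| inv: "x \<in> gen_subgroup E \<Longrightarrow> - x \<in> gen_subgroup E"

definition fin_sym_gen_set :: "'g::group_add set \<Rightarrow> bool" where
  "fin_sym_gen_set E \<longleftrightarrow> finite E \<and> (\<forall>e\<in>E. - e \<in> E) \<and> gen_subgroup E = UNIV"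

definition is_subgroup :: "'g::group_add set \<Rightarrow> bool" where
  "is_subgroup H \<longleftrightarrow> 0 \<in> H \<and> (\<forall>x\<in>H. \<forall>y\<in>H. x + y \<in> H) \<and> (\<forall>x\<in>H. - x \<in> H)"

definition finite_index :: "'g::group_add set \<Rightarrow> bool" where
  "finite_index H \<longleftrightarrow> finite {(\<lambda>h. g + h) ` H | g. True}"

definition virtually_Z :: "'g::group_add itself \<Rightarrow> bool" where
  "virtually_Z _ \<longleftrightarrow> (\<exists>H::'g set. is_subgroup H \<and> finite_index H \<and>
      (\<exists>f :: int \<Rightarrow> 'g. bij_betw f UNIV H \<and> (\<forall>a b. f (a + b) = f a + f b)))"

definition word_len :: "'g::group_add set \<Rightarrow> 'g \<Rightarrow> nat" where
  "word_len E g = (LEAST n. \<exists>xs. set xs \<subseteq> E \<and> length xs = n \<and> sum_list xs = g)"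

definition cdist :: "'g::group_add set \<Rightarrow> ('g \<Rightarrow> 'a) \<Rightarrow> ('g \<Rightarrow> 'a) \<Rightarrow> real" where
  "cdist E x y = (if x = y then 0 else
     (1/2) ^ (LEAST k. \<exists>g. x g \<noteq> y g \<and> word_len E g = k))"

definition cball_conf :: "'g::group_add set \<Rightarrow> ('g \<Rightarrow> 'a) \<Rightarrow> real \<Rightarrow> ('g \<Rightarrow> 'a) set" where
  "cball_conf E x r = {y. cdist E x y \<le> r}"

definition is_CA :: "(('g::group_add \<Rightarrow> 'a) \<Rightarrow> ('g \<Rightarrow> 'a)) \<Rightarrow> bool" where
  "is_CA \<Phi> \<longleftrightarrow> (\<exists>S::'g set. \<exists>\<mu>::('g \<Rightarrow> 'a) \<Rightarrow> 'a. finite S \<and>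
     (\<forall>x g. \<Phi> x g = \<mu> (\<lambda>s. if s \<in> S then x (g + s) else undefined)))"

definition equicont_point :: "'g::group_add set \<Rightarrow> (('g \<Rightarrow> 'a) \<Rightarrow> ('g \<Rightarrow> 'a)) \<Rightarrow> ('g \<Rightarrow> 'a) \<Rightarrow> bool" where
  "equicont_point E \<Phi> x \<longleftrightarrow> (\<forall>\<epsilon>>0. \<exists>\<delta>>0. \<forall>t::nat.
     (\<Phi> ^^ t) ` cball_conf E x \<delta> \<subseteq> cball_conf E ((\<Phi> ^^ t) x) \<epsilon>)"

definition sensitive :: "'g::group_add set \<Rightarrow> (('g \<Rightarrow> 'a) \<Rightarrow> ('g \<Rightarrow> 'a)) \<Rightarrow> bool" where
  "sensitive E \<Phi> \<longleftrightarrow> (\<exists>\<epsilon>>0. \<forall>x. \<forall>\<delta>>0. \<exists>t::nat. \<exists>y\<in>cball_conf E x \<delta>.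
     (\<Phi> ^^ t) y \<notin> cball_conf E ((\<Phi> ^^ t) x) \<epsilon>)"

end

theory Submission
  imports Defs
begin

(* If \<Phi> is not sensitive, some configuration x has a blocking window: every configuration
   that agrees with x on a finite window keeps the orbit of x forever on a slab wider than the
   distance R over which one step of \<Phi> propagates information. Splitting G into the finitely
   many cosets of a copy f(\<int>) of \<int> gives every element an integer level; translation by f(\<int>)
   shifts levels, and neighbours have levels at most R apart. The configuration repeating the
   window of x periodically along f(\<int>) is then an equicontinuity point: the blocking slabs are
   walls that no information crosses, so agreement on a finite window containing two walls
   fixes the orbit between them for all times. *)

section \<open>Cantor balls and word balls\<close>

definition agree_below :: "'g::group_add set \<Rightarrow> nat \<Rightarrow> ('g \<Rightarrow> 'a) \<Rightarrow> ('g \<Rightarrow> 'a) \<Rightarrow> bool" where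
  "agree_below E k x y \<longleftrightarrow> (\<forall>g. word_len E g < k \<longrightarrow> x g = y g)"

lemma cball_conf_half_power_iff:
  "y \<in> cball_conf E x ((1/2) ^ k) \<longleftrightarrow> agree_below E k x y"
proof (cases "x = y")
  case True
  then show ?thesis by (simp add: cball_conf_def cdist_def agree_below_def)
next
  case False
  define L where "L = (LEAST n. \<exists>g. x g \<noteq> y g \<and> word_len E g = n)"
  obtain g0 where g0: "x g0 \<noteq> y g0" "word_len E g0 = L"
    using LeastI_ex[of "\<lambda>n. \<exists>g. x g \<noteq> y g \<and> word_len E g = n"] False
    unfolding L_def by blast
  have L_least: "L \<le> word_len E g" if "x g \<noteq> y g" for g
    unfolding L_def using that by (intro Least_le) blast
  have "y \<in> cball_conf E x ((1/2) ^ k) \<longleftrightarrow> k \<le> L"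
    using False by (simp add: cball_conf_def cdist_def L_def)
  also have "\<dots> \<longleftrightarrow> agree_below E k x y"
  proof
    show "k \<le> L \<Longrightarrow> agree_below E k x y"
      unfolding agree_below_def using L_least by (meson le_trans not_le)
    show "agree_below E k x y \<Longrightarrow> k \<le> L"
      unfolding agree_below_def using g0 by (meson not_le)
  qed
  finally show ?thesis .
qed

lemma sum_list_rev_map_uminus:
  "sum_list (rev (map uminus xs)) = - sum_list (xs :: 'g::group_add list)"
  by (induction xs) (simp_all add: minus_add)

lemma gen_subgroup_imp_sum_list:
  assumes "\<forall>e\<in>E. - e \<in> E" and "g \<in> gen_subgroup E"
  shows "\<exists>xs. set xs \<subseteq> E \<and> sum_list xs = g"
  using assms(2)
proof induction
  case zero
  show ?case by (intro exI[of _ "[]"]) simp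
next
  case (gen e)
  then show ?case by (intro exI[of _ "[e]"]) simp
next
  case (add x y)
  then obtain xs ys where "set xs \<subseteq> E" "sum_list xs = x" "set ys \<subseteq> E" "sum_list ys = y"
    by blast
  then show ?case by (intro exI[of _ "xs @ ys"]) auto
next
  case (inv x)
  then obtain xs where "set xs \<subseteq> E" "sum_list xs = x" by blast
  with assms(1) show ?case
    by (intro exI[of _ "rev (map uminus xs)"]) (auto simp: sum_list_rev_map_uminus)
qed

lemma finite_word_ball:
  assumes "fin_sym_gen_set E"
  shows "finite {g. word_len E g < k}"
proof -
  have "{g. word_len E g < k} \<subseteq> sum_list ` {xs. set xs \<subseteq> E \<and> length xs \<le> k}"
  proof
    fix g assume "g \<in> {g. word_len E g < k}"
    moreover obtain xs where "set xs \<subseteq> E" "sum_list xs = g"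
      using assms gen_subgroup_imp_sum_list unfolding fin_sym_gen_set_def by blast
    then obtain ys where "set ys \<subseteq> E" "length ys = word_len E g" "sum_list ys = g"
      using LeastI_ex[of "\<lambda>n. \<exists>ys. set ys \<subseteq> E \<and> length ys = n \<and> sum_list ys = g"]
      unfolding word_len_def by blast
    ultimately show "g \<in> sum_list ` {xs. set xs \<subseteq> E \<and> length xs \<le> k}" by force
  qed
  moreover have "finite {xs. set xs \<subseteq> E \<and> length xs \<le> k}"
    using assms finite_lists_length_le unfolding fin_sym_gen_set_def by blast
  ultimately show ?thesis by (metis finite_surj)
qed

lemma finite_imp_in_word_ball: "finite F \<Longrightarrow> \<exists>k. \<forall>g\<in>F. word_len E g < k"
  using finite_nat_set_iff_bounded[of "word_len E ` F"] by auto

definition window_controls ::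
    "(('g \<Rightarrow> 'a) \<Rightarrow> ('g \<Rightarrow> 'a)) \<Rightarrow> ('g \<Rightarrow> 'a) \<Rightarrow> 'g set \<Rightarrow> 'g set \<Rightarrow> bool" where
  "window_controls \<Phi> x W D \<longleftrightarrow>
     (\<forall>t y. (\<forall>g\<in>W. y g = x g) \<longrightarrow> (\<forall>g\<in>D. (\<Phi> ^^ t) y g = (\<Phi> ^^ t) x g))"

lemma window_controlsD:
  "window_controls \<Phi> x W D \<Longrightarrow> \<forall>g\<in>W. y g = x g \<Longrightarrow> g \<in> D \<Longrightarrow> (\<Phi> ^^ t) y g = (\<Phi> ^^ t) x g"
  unfolding window_controls_def by blast

lemma window_controls_mono:
  "window_controls \<Phi> x W D \<Longrightarrow> W \<subseteq> W' \<Longrightarrow> window_controls \<Phi> x W' D"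
  unfolding window_controls_def by blast

lemma sensitive_imp_no_equicont_point:
  assumes "sensitive E \<Phi>"
  shows "\<not> equicont_point E \<Phi> x"
proof
  assume "equicont_point E \<Phi> x"
  obtain \<epsilon> where "\<epsilon> > 0" and sens: "\<forall>\<delta>>0. \<exists>t. \<exists>y\<in>cball_conf E x \<delta>.
      (\<Phi> ^^ t) y \<notin> cball_conf E ((\<Phi> ^^ t) x) \<epsilon>"
    using assms unfolding sensitive_def by blast
  then obtain \<delta> where "\<delta> > 0"
    and "\<forall>t. (\<Phi> ^^ t) ` cball_conf E x \<delta> \<subseteq> cball_conf E ((\<Phi> ^^ t) x) \<epsilon>"
    using \<open>equicont_point E \<Phi> x\<close> unfolding equicont_point_def by blast
  with sens show False by blast
qed

lemma not_sensitive_imp_window_controls: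
  assumes "fin_sym_gen_set E" and "\<not> sensitive E \<Phi>" and "finite D"
  shows "\<exists>x W. finite W \<and> window_controls \<Phi> x W D"
proof -
  obtain k where k: "\<forall>g\<in>D. word_len E g < k"
    using finite_imp_in_word_ball[OF \<open>finite D\<close>] by blast
  have "(0::real) < (1/2) ^ k" by simp
  then obtain x \<delta> where "\<delta> > 0" and stable: "\<forall>t. \<forall>y\<in>cball_conf E x \<delta>.
      (\<Phi> ^^ t) y \<in> cball_conf E ((\<Phi> ^^ t) x) ((1/2) ^ k)"
    using assms(2) unfolding sensitive_def by blast
  obtain m where "(1/2::real) ^ m < \<delta>"
    using real_arch_pow_inv[OF \<open>\<delta> > 0\<close>, of "1/2"] by auto
  have "window_controls \<Phi> x {g. word_len E g < m} D"
    unfolding window_controls_def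
  proof (intro allI impI ballI)
    fix t y g
    assume "\<forall>g\<in>{g. word_len E g < m}. y g = x g" and "g \<in> D"
    then have "y \<in> cball_conf E x ((1/2) ^ m)"
      by (simp add: cball_conf_half_power_iff agree_below_def)
    then have "y \<in> cball_conf E x \<delta>"
      using \<open>(1/2) ^ m < \<delta>\<close> by (simp add: cball_conf_def)
    then have "agree_below E k ((\<Phi> ^^ t) x) ((\<Phi> ^^ t) y)"
      using stable by (simp add: flip: cball_conf_half_power_iff)
    then show "(\<Phi> ^^ t) y g = (\<Phi> ^^ t) x g"
      using k \<open>g \<in> D\<close> unfolding agree_below_def by simp
  qed
  then show ?thesis using finite_word_ball[OF assms(1)] by blast
qed

lemma equicont_point_if_window_controls:
  assumes "fin_sym_gen_set E"
    and controls: "\<And>D. finite D \<Longrightarrow> \<exists>W. finite W \<and> window_controls \<Phi> x W D"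
  shows "equicont_point E \<Phi> x"
  unfolding equicont_point_def
proof (intro allI impI)
  fix \<epsilon> :: real
  assume "\<epsilon> > 0"
  obtain k where "(1/2::real) ^ k < \<epsilon>"
    using real_arch_pow_inv[OF \<open>\<epsilon> > 0\<close>, of "1/2"] by auto
  obtain W where "finite W" and W: "window_controls \<Phi> x W {g. word_len E g < k}"
    using controls[OF finite_word_ball[OF assms(1)]] by blast
  obtain m where m: "\<forall>g\<in>W. word_len E g < m"
    using finite_imp_in_word_ball[OF \<open>finite W\<close>] by blast
  have "(\<Phi> ^^ t) y \<in> cball_conf E ((\<Phi> ^^ t) x) \<epsilon>" if "y \<in> cball_conf E x ((1/2) ^ m)" for t y
  proof -
    have "agree_below E m x y"
      using that by (simp add: cball_conf_half_power_iff)
    then have "\<forall>g\<in>W. y g = x g"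
      using m unfolding agree_below_def by (metis (mono_tags))
    then have "agree_below E k ((\<Phi> ^^ t) x) ((\<Phi> ^^ t) y)"
      using window_controlsD[OF W \<open>\<forall>g\<in>W. y g = x g\<close>] unfolding agree_below_def by simp
    then have "(\<Phi> ^^ t) y \<in> cball_conf E ((\<Phi> ^^ t) x) ((1/2) ^ k)"
      by (simp add: cball_conf_half_power_iff)
    then show ?thesis
      using \<open>(1/2) ^ k < \<epsilon>\<close> by (simp add: cball_conf_def)
  qed
  then show "\<exists>\<delta>>0. \<forall>t. (\<Phi> ^^ t) ` cball_conf E x \<delta> \<subseteq> cball_conf E ((\<Phi> ^^ t) x) \<epsilon>"
    by (intro exI[of _ "(1/2) ^ m"]) (simp add: image_subset_iff)
qed

definition local_rule :: "(('g::group_add \<Rightarrow> 'a) \<Rightarrow> ('g \<Rightarrow> 'a)) \<Rightarrow> 'g set \<Rightarrow> (('g \<Rightarrow> 'a) \<Rightarrow> 'a) \<Rightarrow> bool" where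
  "local_rule \<Phi> S \<mu> \<longleftrightarrow> (\<forall>x g. \<Phi> x g = \<mu> (\<lambda>s. if s \<in> S then x (g + s) else undefined))"

lemma is_CA_iff_local_rule: "is_CA \<Phi> \<longleftrightarrow> (\<exists>S \<mu>. finite S \<and> local_rule \<Phi> S \<mu>)"
  unfolding is_CA_def local_rule_def ..

lemma local_rule_cong:
  assumes "local_rule \<Phi> S \<mu>" and "\<forall>s\<in>S. x (g + s) = y (g + s)"
  shows "\<Phi> x g = \<Phi> y g"
proof -
  have "(\<lambda>s. if s \<in> S then x (g + s) else undefined) = (\<lambda>s. if s \<in> S then y (g + s) else undefined)"
    using assms(2) by auto
  then show ?thesis
    using assms(1) unfolding local_rule_def by metis
qed

lemma local_rule_commutes_translation:
  assumes "local_rule \<Phi> S \<mu>"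
  shows "\<Phi> (\<lambda>g. x (a + g)) = (\<lambda>g. \<Phi> x (a + g))"
proof
  fix g
  have "\<Phi> (\<lambda>g. x (a + g)) g = \<mu> (\<lambda>s. if s \<in> S then x (a + (g + s)) else undefined)"
    using assms unfolding local_rule_def by simp
  also have "\<dots> = \<Phi> x (a + g)"
    using assms unfolding local_rule_def by (simp only: add.assoc)
  finally show "\<Phi> (\<lambda>g. x (a + g)) g = \<Phi> x (a + g)" .
qed

lemma local_rule_funpow_commutes_translation:
  assumes "local_rule \<Phi> S \<mu>"
  shows "(\<Phi> ^^ t) (\<lambda>g. x (a + g)) = (\<lambda>g. (\<Phi> ^^ t) x (a + g))"
  by (induction t) (simp_all add: local_rule_commutes_translation[OF assms])

section \<open>Levels in a group with a finite-index copy of \<int>\<close>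

locale Z_finite_index =
  fixes H :: "'g::group_add set" and f :: "int \<Rightarrow> 'g"
  assumes subgroup: "is_subgroup H" and finite_index: "finite_index H"
    and bij: "bij_betw f UNIV H" and f_add: "\<And>a b. f (a + b) = f a + f b"
begin

lemma f_zero: "f 0 = 0"
proof -
  have "f 0 + f 0 = f (0 + 0)"
    by (rule f_add[symmetric])
  also have "\<dots> = f 0 + 0" by simp
  finally show ?thesis by (rule add_left_imp_eq)
qed

lemma f_minus: "f (- p) = - f p"
proof -
  have "f (- p) + f p = 0"
    using f_add[of "- p" p, symmetric] f_zero by simp
  then show ?thesis by (simp add: eq_neg_iff_add_eq_0)
qed

lemma range_f: "range f = H"
  using bij unfolding bij_betw_def by simp

lemma inj_f: "inj f"
  using bij unfolding bij_betw_def by simp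

lemma zero_in_H: "0 \<in> H"
  and add_in_H: "x \<in> H \<Longrightarrow> y \<in> H \<Longrightarrow> x + y \<in> H"
  and minus_in_H: "x \<in> H \<Longrightarrow> - x \<in> H"
  using subgroup unfolding is_subgroup_def by auto

lemma translate_H:
  assumes "h \<in> H"
  shows "(+) h ` H = H"
proof
  show "(+) h ` H \<subseteq> H"
    using add_in_H assms by blast
  show "H \<subseteq> (+) h ` H"
  proof
    fix k assume "k \<in> H"
    then have "- h + k \<in> H"
      using add_in_H minus_in_H assms by blast
    moreover have "k = h + (- h + k)" by simp
    ultimately show "k \<in> (+) h ` H" by blast
  qed
qed

(* The representative depends only on the left coset -g + H, so by finite index it takes
   finitely many values; level g is the \<int>-coordinate of g in the coset H + coset_rep g. *)

definition coset_rep :: "'g \<Rightarrow> 'g" where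
  "coset_rep g = - (SOME c. c \<in> (+) (- g) ` H)"

definition level :: "'g \<Rightarrow> int" where
  "level g = inv f (g - coset_rep g)"

lemma diff_coset_rep_in_H: "g - coset_rep g \<in> H"
proof -
  have "- g + 0 \<in> (+) (- g) ` H"
    using zero_in_H by (rule imageI)
  then have "(SOME c. c \<in> (+) (- g) ` H) \<in> (+) (- g) ` H"
    by (rule someI)
  then obtain h where "h \<in> H" and "(SOME c. c \<in> (+) (- g) ` H) = - g + h"
    by blast
  then have "coset_rep g = - (- g + h)"
    unfolding coset_rep_def by simp
  then have "g - coset_rep g = h"
    by (simp add: diff_conv_add_uminus)
  with \<open>h \<in> H\<close> show ?thesis by simp
qed

lemma coset_rep_H_add: "h \<in> H \<Longrightarrow> coset_rep (h + g) = coset_rep g"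
proof -
  assume "h \<in> H"
  have "(+) (- (h + g)) ` H = (+) (- g) ` (+) (- h) ` H"
    unfolding image_image by (intro image_cong refl) (simp only: minus_add add.assoc)
  also have "\<dots> = (+) (- g) ` H"
    using translate_H minus_in_H \<open>h \<in> H\<close> by simp
  finally show ?thesis unfolding coset_rep_def by simp
qed

lemma f_level: "f (level g) = g - coset_rep g"
  unfolding level_def using diff_coset_rep_in_H range_f by (metis f_inv_into_f)

lemma level_f_add: "level (f p + g) = p + level g"
proof -
  have "f (level (f p + g)) = f p + (g - coset_rep g)"
    using f_level coset_rep_H_add[of "f p"] range_f by (auto simp: add_diff_eq)
  also have "\<dots> = f (p + level g)"
    by (simp add: f_add f_level)
  finally show ?thesis using inj_f by (simp add: inj_eq)
qed

lemma level_add: "level (g + s) = level g + level (coset_rep g + s)"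
proof -
  have "g + s = f (level g) + (coset_rep g + s)"
    by (simp add: f_level add.assoc[symmetric])
  then show ?thesis using level_f_add by metis
qed

lemma finite_range_coset_rep: "finite (range coset_rep)"
proof -
  have "range coset_rep \<subseteq> (\<lambda>C. - (SOME c. c \<in> C)) ` {(\<lambda>h. g + h) ` H | g. True}"
    unfolding coset_rep_def by blast
  then show ?thesis
    using finite_index unfolding finite_index_def by (rule finite_surj[rotated])
qed

definition level_slab :: "int \<Rightarrow> int \<Rightarrow> 'g set" where
  "level_slab a b = {g. a \<le> level g \<and> level g \<le> b}"

lemma finite_level_slab: "finite (level_slab a b)"
proof -
  have "level_slab a b \<subseteq> (\<lambda>(n, c). f n + c) ` ({a..b} \<times> range coset_rep)"
  proof
    fix g assume "g \<in> level_slab a b"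
    moreover have "g = f (level g) + coset_rep g" by (simp add: f_level)
    ultimately show "g \<in> (\<lambda>(n, c). f n + c) ` ({a..b} \<times> range coset_rep)"
      unfolding level_slab_def by (intro image_eqI[of _ _ "(level g, coset_rep g)"]) auto
  qed
  moreover have "finite ((\<lambda>(n, c). f n + c) ` ({a..b} \<times> range coset_rep))"
    using finite_range_coset_rep by simp
  ultimately show ?thesis by (rule finite_subset)
qed

lemma level_bounded_on_finite: "finite F \<Longrightarrow> \<exists>Q. \<forall>g\<in>F. \<bar>level g\<bar> \<le> Q"
  using bdd_above_finite[of "(\<lambda>g. \<bar>level g\<bar>) ` F"] unfolding bdd_above_def by auto

lemma level_jump_bounded:
  assumes "finite S"
  shows "\<exists>R\<ge>1. \<forall>g. \<forall>s\<in>S. \<bar>level (g + s) - level g\<bar> \<le> R"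
proof -
  have "finite ((\<lambda>(c, s). c + s) ` (range coset_rep \<times> S))"
    using finite_range_coset_rep assms by simp
  then obtain Q where Q: "\<forall>c s. s \<in> S \<longrightarrow> \<bar>level (coset_rep c + s)\<bar> \<le> Q"
    using level_bounded_on_finite by fastforce
  show ?thesis
  proof (intro exI[of _ "max Q 1"] conjI allI ballI)
    fix g s assume "s \<in> S"
    then have "\<bar>level (coset_rep g + s)\<bar> \<le> Q"
      using Q by blast
    then show "\<bar>level (g + s) - level g\<bar> \<le> max Q 1"
      using level_add[of g s] by simp
  qed simp
qed

section \<open>Blocking windows\<close>

definition has_copy_at :: "int \<Rightarrow> ('g \<Rightarrow> 'a) \<Rightarrow> int \<Rightarrow> ('g \<Rightarrow> 'a) \<Rightarrow> bool" where
  "has_copy_at M x p y \<longleftrightarrow> (\<forall>g\<in>level_slab (- M) M. y (f p + g) = x g)"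

lemma has_copy_at_if_agree:
  assumes "has_copy_at M x p z" and "\<forall>g\<in>level_slab (p - M) (p + M). y g = z g"
  shows "has_copy_at M x p y"
  unfolding has_copy_at_def
proof
  fix g assume "g \<in> level_slab (- M) M"
  then have "f p + g \<in> level_slab (p - M) (p + M)"
    by (simp add: level_slab_def level_f_add)
  then show "y (f p + g) = x g"
    using assms \<open>g \<in> level_slab (- M) M\<close> unfolding has_copy_at_def by simp
qed

(* With k the index of the block of 2M + 1 consecutive levels containing level g, translating
   g by f (-(2M + 1) k) moves it into level_slab (-M) M. *)
definition periodic_extension :: "int \<Rightarrow> ('g \<Rightarrow> 'a) \<Rightarrow> ('g \<Rightarrow> 'a)" where
  "periodic_extension M x g = x (f (- (2 * M + 1) * ((level g + M) div (2 * M + 1))) + g)"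

lemma has_copy_at_periodic_extension:
  assumes "0 \<le> M"
  shows "has_copy_at M x ((2 * M + 1) * q) (periodic_extension M x)"
  unfolding has_copy_at_def
proof
  fix g assume "g \<in> level_slab (- M) M"
  let ?P = "2 * M + 1"
  have "(level g + M) div ?P = 0"
    using \<open>g \<in> level_slab (- M) M\<close> unfolding level_slab_def by (intro div_pos_pos_trivial) auto
  have "(level (f (?P * q) + g) + M) div ?P = ((level g + M) + q * ?P) div ?P"
    by (simp add: level_f_add algebra_simps)
  also have "\<dots> = q"
    using assms \<open>(level g + M) div ?P = 0\<close> by simp
  finally have "periodic_extension M x (f (?P * q) + g) = x (f (- ?P * q) + (f (?P * q) + g))"
    unfolding periodic_extension_def by (simp only:)
  also have "\<dots> = x g"
    by (simp only: mult_minus_left f_minus minus_add_cancel)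
  finally show "periodic_extension M x (f (?P * q) + g) = x g" .
qed

(* R bounds the level jump across the neighbourhood of \<Phi>, so a slab of width R whose orbit
   is frozen is a wall that no information crosses. *)
definition blocking :: "(('g \<Rightarrow> 'a) \<Rightarrow> ('g \<Rightarrow> 'a)) \<Rightarrow> int \<Rightarrow> int \<Rightarrow> ('g \<Rightarrow> 'a) \<Rightarrow> bool" where
  "blocking \<Phi> R M x \<longleftrightarrow> window_controls \<Phi> x (level_slab (- M) M) (level_slab 0 (R - 1))"

lemma orbit_at_copy:
  assumes rule: "local_rule \<Phi> S \<mu>" and "blocking \<Phi> R M x" and "has_copy_at M x p y"
    and "g \<in> level_slab p (p + R - 1)"
  shows "(\<Phi> ^^ t) y g = (\<Phi> ^^ t) x (f (- p) + g)"
proof -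
  have "\<forall>k\<in>level_slab (- M) M. y (f p + k) = x k"
    using assms(3) unfolding has_copy_at_def .
  moreover have "f (- p) + g \<in> level_slab 0 (R - 1)"
    using assms(4) by (simp add: level_slab_def level_f_add)
  ultimately have "(\<Phi> ^^ t) (\<lambda>k. y (f p + k)) (f (- p) + g) = (\<Phi> ^^ t) x (f (- p) + g)"
    using window_controlsD[OF assms(2)[unfolded blocking_def], of "\<lambda>k. y (f p + k)"] by simp
  then show ?thesis
    by (simp add: local_rule_funpow_commutes_translation[OF rule] f_minus)
qed

lemma orbits_agree_between_copies:
  assumes rule: "local_rule \<Phi> S \<mu>" and jump: "\<forall>g. \<forall>s\<in>S. \<bar>level (g + s) - level g\<bar> \<le> R"
    and blocking: "blocking \<Phi> R M x"
    and copies: "has_copy_at M x a y" "has_copy_at M x (- a) y"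
      "has_copy_at M x a z" "has_copy_at M x (- a) z"
    and agree: "\<forall>g\<in>level_slab (- a) (a + R - 1). y g = z g"
  shows "\<forall>g\<in>level_slab (- a) (a + R - 1). (\<Phi> ^^ t) y g = (\<Phi> ^^ t) z g"
proof (induction t)
  case 0
  then show ?case using agree by simp
next
  case (Suc t)
  show ?case
  proof
    fix g assume g: "g \<in> level_slab (- a) (a + R - 1)"
    consider "g \<in> level_slab (- a) (- a + R - 1)" | "g \<in> level_slab a (a + R - 1)"
      | "- a + R - 1 < level g" and "level g < a"
      using g by (force simp: level_slab_def)
    then show "(\<Phi> ^^ Suc t) y g = (\<Phi> ^^ Suc t) z g"
    proof cases
      case 1
      then show ?thesis
        using orbit_at_copy[OF rule blocking copies(2) 1] orbit_at_copy[OF rule blocking copies(4) 1]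
        by (simp only:)
    next
      case 2
      then show ?thesis
        using orbit_at_copy[OF rule blocking copies(1) 2] orbit_at_copy[OF rule blocking copies(3) 2]
        by (simp only:)
    next
      case 3
      have "\<forall>s\<in>S. (\<Phi> ^^ t) y (g + s) = (\<Phi> ^^ t) z (g + s)"
      proof
        fix s assume "s \<in> S"
        then have "\<bar>level (g + s) - level g\<bar> \<le> R"
          using jump by blast
        then have "g + s \<in> level_slab (- a) (a + R - 1)"
          using 3 unfolding level_slab_def mem_Collect_eq abs_le_iff by linarith
        then show "(\<Phi> ^^ t) y (g + s) = (\<Phi> ^^ t) z (g + s)"
          using Suc.IH by blast
      qed
      then have "\<Phi> ((\<Phi> ^^ t) y) g = \<Phi> ((\<Phi> ^^ t) z) g"
        by (rule local_rule_cong[OF rule])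
      then show ?thesis by simp
    qed
  qed
qed

lemma equicont_point_periodic_extension:
  assumes "fin_sym_gen_set E" and rule: "local_rule \<Phi> S \<mu>"
    and jump: "\<forall>g. \<forall>s\<in>S. \<bar>level (g + s) - level g\<bar> \<le> R" and "1 \<le> R" and "R \<le> M"
    and blocking: "blocking \<Phi> R M x"
  shows "equicont_point E \<Phi> (periodic_extension M x)"
  using assms(1)
proof (rule equicont_point_if_window_controls)
  fix D :: "'g set" assume "finite D"
  define z where "z = periodic_extension M x"
  obtain Q where Q: "\<forall>g\<in>D. \<bar>level g\<bar> \<le> Q"
    using level_bounded_on_finite[OF \<open>finite D\<close>] by blast
  define a where "a = (2 * M + 1) * max Q 0"
  have "1 * max Q 0 \<le> a"
    unfolding a_def using \<open>1 \<le> R\<close> \<open>R \<le> M\<close> by (intro mult_right_mono) auto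
  then have "Q \<le> a" and "0 \<le> a" by auto
  have z_copies: "has_copy_at M x a z" "has_copy_at M x (- a) z"
    using has_copy_at_periodic_extension[of M x "max Q 0"] has_copy_at_periodic_extension[of M x "- max Q 0"]
      \<open>1 \<le> R\<close> \<open>R \<le> M\<close> unfolding z_def a_def by simp_all
  define W where "W = level_slab (- a - M) (a + M)"
  have "window_controls \<Phi> z W D"
    unfolding window_controls_def
  proof (intro allI impI ballI)
    fix t y g assume agree: "\<forall>g\<in>W. y g = z g" and "g \<in> D"
    have "level_slab (a - M) (a + M) \<subseteq> W" "level_slab (- a - M) (- a + M) \<subseteq> W"
      and "level_slab (- a) (a + R - 1) \<subseteq> W"
      using \<open>0 \<le> a\<close> \<open>1 \<le> R\<close> \<open>R \<le> M\<close> unfolding W_def level_slab_def by auto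
    then have "has_copy_at M x a y" "has_copy_at M x (- a) y"
      and "\<forall>g\<in>level_slab (- a) (a + R - 1). y g = z g"
      using has_copy_at_if_agree[OF z_copies(1)] has_copy_at_if_agree[OF z_copies(2)] agree
      by blast+
    then have "\<forall>g\<in>level_slab (- a) (a + R - 1). (\<Phi> ^^ t) y g = (\<Phi> ^^ t) z g"
      using orbits_agree_between_copies[OF rule jump blocking] z_copies by blast
    moreover have "g \<in> level_slab (- a) (a + R - 1)"
      using Q \<open>g \<in> D\<close> \<open>Q \<le> a\<close> \<open>1 \<le> R\<close> unfolding level_slab_def by fastforce
    ultimately show "(\<Phi> ^^ t) y g = (\<Phi> ^^ t) z g" by blast
  qed
  then show "\<exists>W. finite W \<and> window_controls \<Phi> (periodic_extension M x) W D"
    using finite_level_slab unfolding W_def z_def by blast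
qed

lemma blocking_exists_if_not_sensitive:
  assumes "fin_sym_gen_set E" and "\<not> sensitive E \<Phi>"
  shows "\<exists>M x. R \<le> M \<and> blocking \<Phi> R M x"
proof -
  obtain x W where "finite W" and W: "window_controls \<Phi> x W (level_slab 0 (R - 1))"
    using not_sensitive_imp_window_controls[OF assms finite_level_slab] by blast
  obtain Q where Q: "\<forall>g\<in>W. \<bar>level g\<bar> \<le> Q"
    using level_bounded_on_finite[OF \<open>finite W\<close>] by blast
  have "W \<subseteq> level_slab (- max Q R) (max Q R)"
    using Q unfolding level_slab_def by fastforce
  then have "blocking \<Phi> R (max Q R) x"
    using W window_controls_mono unfolding blocking_def by blast
  then show ?thesis by (intro exI[of _ "max Q R"]) auto
qed

end

theorem theorem1:
  fixes E :: "'g::group_add set"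
    and \<Phi> :: "('g \<Rightarrow> 'a::finite) \<Rightarrow> ('g \<Rightarrow> 'a)"
  assumes "fin_sym_gen_set E"
    and "virtually_Z TYPE('g)"
    and "is_CA \<Phi>"
  shows "sensitive E \<Phi> \<longleftrightarrow> \<not> (\<exists>x. equicont_point E \<Phi> x)"
proof
  assume "sensitive E \<Phi>"
  then show "\<not> (\<exists>x. equicont_point E \<Phi> x)"
    using sensitive_imp_no_equicont_point by blast
next
  assume no_equicont: "\<not> (\<exists>x. equicont_point E \<Phi> x)"
  obtain H :: "'g set" and f where "Z_finite_index H f"
    using assms(2) unfolding virtually_Z_def Z_finite_index_def by blast
  then interpret Z_finite_index H f .
  obtain S \<mu> where "finite S" and rule: "local_rule \<Phi> S \<mu>"
    using assms(3) is_CA_iff_local_rule by blast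
  obtain R where "1 \<le> R" and jump: "\<forall>g. \<forall>s\<in>S. \<bar>level (g + s) - level g\<bar> \<le> R"
    using level_jump_bounded[OF \<open>finite S\<close>] by blast
  show "sensitive E \<Phi>"
  proof (rule ccontr)
    assume "\<not> sensitive E \<Phi>"
    then obtain M x where "R \<le> M" and "blocking \<Phi> R M x"
      using blocking_exists_if_not_sensitive[OF assms(1)] by blast
    then have "equicont_point E \<Phi> (periodic_extension M x)"
      using equicont_point_periodic_extension[OF assms(1) rule jump \<open>1 \<le> R\<close>] by blast
    with no_equicont show False by blast
  qed
qed

end
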